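(* Let $G$ be a finite connected graph with a real structure. Then $s(G)\equiv g(G)+1 \pmod 2$ and $0\le s(G)\le g(G)+1$; moreover $s(G)\neq g(G)+1$ if $a(G)=1$, and $s(G)\neq 0$ if $a(G)=0$.
   Context: A finite graph $G$ consists of a finite vertex set $V(G)$, a finite edge set $E(G)$ and an incidence function $\psi$ assigning to each edge $e$ a set $\psi(e)\subset V(G)$ of one or two vertices (its ends); loops ($|\psi(e)|=1$) and multiple edges are allowed. A walk is a sequence $v_0e_0v_1\cdots e_{n-1}v_n$ with $\psi(e_i)=\{v_i,v_{i+1}\}$; $G$ is connected if any two vertices are joined by a walk. The genus of a graph $H$ is $g(H)=c(H)+|E(H)|-|V(H)|$, where $c(H)$ is its number of connected components. A real structure on $G$ is a pair of involutions $\iota_V$ of $V(G)$ and $\iota_E$ of $E(G)$ with $\psi(\iota_E(e))=\iota_V(\psi(e))$ for all $e$; write $\overline v=\iota_V(v)$, $\overline e=\iota_E(e)$. A vertex $v$ is real if $\overline v=v$; $V_{\mathbb R}(G)$ is the set of real vertices. An edge $e$ is real if $\overline e=e$; a real edge is isolated if $\psi(e)\not\subset V_{\mathbb R}(G)$ and non-isolated otherwise. The real locus graph $G(\mathbb R)$ is the subgraph with vertex set $V_{\mathbb R}(G)$ and edge set the non-isolated real edges. Let $e^i(G)$ be the number of isolated real edges and $G(\mathbb R)_1,\dots,G(\mathbb R)_{s'}$ the connected components of $G(\mathbb R)$ (possibly $s'=0$). Define $s(G)=e^i(G)+\sum_{i=1}^{s'}\bigl(g(G(\mathbb R)_i)+1\bigr)$.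 Define $a(G)=1$ if there exist a non-real vertex $v$ and a walk in $G$ with ends $v$ and $\overline v$ containing neither a real vertex nor a real edge; otherwise $a(G)=0$. *)

theory Defs
  imports Main
begin

record ('v, 'e) graph =
  verts :: "'v set"
  edges :: "'e set"
  inc   :: "'e \<Rightarrow> 'v set"

definition is_graph :: "('v, 'e) graph \<Rightarrow> bool" where
  "is_graph G \<longleftrightarrow> finite (verts G) \<and> finite (edges G) \<and>
     (\<forall>e\<in>edges G. inc G e \<subseteq> verts G \<and> (card (inc G e) = 1 \<or> card (inc G e) = 2))"

definition is_walk :: "('v, 'e) graph \<Rightarrow> 'v list \<Rightarrow> 'e list \<Rightarrow> bool" where
  "is_walk G vs es \<longleftrightarrow> length vs = Suc (length es) \<and> set vs \<subseteq> verts G \<and> set es \<subseteq> edges G \<and>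
     (\<forall>i<length es. inc G (es ! i) = {vs ! i, vs ! Suc i})"

definition joined :: "('v, 'e) graph \<Rightarrow> 'v \<Rightarrow> 'v \<Rightarrow> bool" where
  "joined G u v \<longleftrightarrow> (\<exists>vs es. is_walk G vs es \<and> hd vs = u \<and> last vs = v)"

definition connected_graph :: "('v, 'e) graph \<Rightarrow> bool" where
  "connected_graph G \<longleftrightarrow> verts G \<noteq> {} \<and> (\<forall>u\<in>verts G. \<forall>v\<in>verts G. joined G u v)"

definition components :: "('v, 'e) graph \<Rightarrow> 'v set set" where
  "components G = (\<lambda>u. {v\<in>verts G. joined G u v}) ` verts G"

definition comp_subgraph :: "('v, 'e) graph \<Rightarrow> 'v set \<Rightarrow> ('v, 'e) graph" where
  "comp_subgraph G C = \<lparr>verts = C, edges = {e\<in>edges G. inc G e \<subseteq> C}, inc = inc G\<rparr>"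

definition genus :: "('v, 'e) graph \<Rightarrow> int" where
  "genus H = int (card (components H)) + int (card (edges H)) - int (card (verts H))"

definition real_structure :: "('v, 'e) graph \<Rightarrow> ('v \<Rightarrow> 'v) \<Rightarrow> ('e \<Rightarrow> 'e) \<Rightarrow> bool" where
  "real_structure G iV iE \<longleftrightarrow>
     (\<forall>v\<in>verts G. iV v \<in> verts G \<and> iV (iV v) = v) \<and>
     (\<forall>e\<in>edges G. iE e \<in> edges G \<and> iE (iE e) = e) \<and>
     (\<forall>e\<in>edges G. inc G (iE e) = iV ` inc G e)"

definition real_verts :: "('v, 'e) graph \<Rightarrow> ('v \<Rightarrow> 'v) \<Rightarrow> 'v set" where
  "real_verts G iV = {v\<in>verts G. iV v = v}"

definition isolated_real_edges :: "('v, 'e) graph \<Rightarrow> ('v \<Rightarrow> 'v) \<Rightarrow> ('e \<Rightarrow> 'e) \<Rightarrow> 'e set" where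
  "isolated_real_edges G iV iE = {e\<in>edges G. iE e = e \<and> \<not> inc G e \<subseteq> real_verts G iV}"

definition real_locus :: "('v, 'e) graph \<Rightarrow> ('v \<Rightarrow> 'v) \<Rightarrow> ('e \<Rightarrow> 'e) \<Rightarrow> ('v, 'e) graph" where
  "real_locus G iV iE = \<lparr>verts = real_verts G iV,
      edges = {e\<in>edges G. iE e = e \<and> inc G e \<subseteq> real_verts G iV}, inc = inc G\<rparr>"

definition s_inv :: "('v, 'e) graph \<Rightarrow> ('v \<Rightarrow> 'v) \<Rightarrow> ('e \<Rightarrow> 'e) \<Rightarrow> int" where
  "s_inv G iV iE = int (card (isolated_real_edges G iV iE)) +
     (\<Sum>C\<in>components (real_locus G iV iE). genus (comp_subgraph (real_locus G iV iE) C) + 1)"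

definition a_inv :: "('v, 'e) graph \<Rightarrow> ('v \<Rightarrow> 'v) \<Rightarrow> ('e \<Rightarrow> 'e) \<Rightarrow> nat" where
  "a_inv G iV iE = (if (\<exists>v\<in>verts G. iV v \<noteq> v \<and> (\<exists>vs es. is_walk G vs es \<and> hd vs = v \<and> last vs = iV v \<and>
        (\<forall>u\<in>set vs. iV u \<noteq> u) \<and> (\<forall>e\<in>set es. iE e \<noteq> e))) then 1 else 0)"

end

theory Submission
  imports Defs
begin

text \<open>Split the edges of G into the isolated real edges, the edges of the real locus, and the
  non-real edges avoiding resp. touching a real vertex. Non-real vertices and non-real edges come
  in conjugate pairs, and s(G) = e^i + |E(G(\<real>))| + 2 s' - |V_\<real>| because each component of
  G(\<real>) is connected, so g(G) + 1 - s(G) = 2 + |E_away| + |E_touch| - |V_cplx| - 2 s' is even.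

  The bound s(G) + a(G) \<le> g(G) + 1 is a Harnack-type count of equivalence classes of vertices.
  Starting from the s' components of G(\<real>) and the |V_cplx| non-real singletons, adding the edges
  E_away leaves at least s' + |V_cplx| - |E_away| classes. Identifying every vertex with its
  conjugate at most halves this number, but does not merge the conjugation-invariant classes:
  the s' real components and, if a(G) = 1, the class of a non-real vertex joined to its conjugate
  by a path avoiding everything real. Since G is connected, adding one edge of each conjugate pair
  in E_touch then joins everything, so there are at most 1 + |E_touch| / 2 such classes.

  Finally s(G) \<ge> e^i + s' because components have nonnegative genus; if s(G) = 0 there is
  nothing real at all, and any walk from a vertex to its conjugate shows a(G) = 1.\<close>

definition edge_rel :: "('v, 'e) graph \<Rightarrow> 'e set \<Rightarrow> ('v \<times> 'v) set" where
  "edge_rel G F = {(x, y). \<exists>e\<in>F. inc G e = {x, y}}"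

definition rtrancl_classes :: "'v set \<Rightarrow> ('v \<times> 'v) set \<Rightarrow> 'v set set" where
  "rtrancl_classes V R = (\<lambda>u. R\<^sup>* `` {u}) ` V"

lemma edge_rel_mono: "F \<subseteq> F' \<Longrightarrow> edge_rel G F \<subseteq> edge_rel G F'"
  unfolding edge_rel_def by blast

lemma edge_rel_Un: "edge_rel G (F \<union> F') = edge_rel G F \<union> edge_rel G F'"
  unfolding edge_rel_def by blast

lemma edge_rel_insert: "edge_rel G (insert e F) = {(x, y). inc G e = {x, y}} \<union> edge_rel G F"
  unfolding edge_rel_def by blast

lemma sym_edge_rel: "sym (edge_rel G F)"
  unfolding edge_rel_def sym_def by (auto simp: insert_commute)

lemma edge_rel_subset: "\<forall>e\<in>F. inc G e \<subseteq> V \<Longrightarrow> edge_rel G F \<subseteq> V \<times> V"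
  unfolding edge_rel_def by auto

lemma edge_rel_cong: "inc H = inc G \<Longrightarrow> edge_rel H F = edge_rel G F"
  unfolding edge_rel_def by simp

lemma finite_rtrancl_classes: "finite V \<Longrightarrow> finite (rtrancl_classes V R)"
  unfolding rtrancl_classes_def by simp

lemma rtrancl_Image_subset: "R \<subseteq> V \<times> V \<Longrightarrow> u \<in> V \<Longrightarrow> R\<^sup>* `` {u} \<subseteq> V"
  using Image_closed_trancl[of R V] Image_mono[of "R\<^sup>*" "R\<^sup>*" "{u}" V] by blast

lemma rtrancl_Image_eq:
  assumes "sym R" "x \<in> R\<^sup>* `` {u}"
  shows "R\<^sup>* `` {x} = R\<^sup>* `` {u}"
  using assms sym_rtrancl[OF assms(1)] by (blast intro: rtrancl_trans dest: symD)

lemma rtrancl_Image_meet: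
  "sym R \<Longrightarrow> x \<in> R\<^sup>* `` {u} \<Longrightarrow> x \<in> R\<^sup>* `` {w} \<Longrightarrow> R\<^sup>* `` {u} = R\<^sup>* `` {w}"
  by (metis rtrancl_Image_eq)

lemma rtrancl_classes_empty: "rtrancl_classes V {} = (\<lambda>u. {u}) ` V"
  unfolding rtrancl_classes_def by simp

lemma card_rtrancl_classes_empty: "card (rtrancl_classes V {}) = card V"
  unfolding rtrancl_classes_empty by (rule card_image) (simp add: inj_on_def)

lemma card_doubleton_le: "card {a, b} \<le> 2"
  by (cases "a = b") simp_all

lemma rtrancl_Image_insert_pair:
  assumes "sym R" "u \<notin> R\<^sup>* `` {a}" "u \<notin> R\<^sup>* `` {b}"
  shows "(R \<union> {(a, b), (b, a)})\<^sup>* `` {u} = R\<^sup>* `` {u}"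
proof
  have "(u, w) \<in> R\<^sup>*" if "(u, w) \<in> (R \<union> {(a, b), (b, a)})\<^sup>*" for w
    using that
  proof (induction rule: rtrancl_induct)
    case (step y z)
    have "y \<notin> {a, b}"
      using step.IH assms sym_rtrancl[OF assms(1)] by (auto dest: symD)
    then show ?case using step by (auto intro: rtrancl_into_rtrancl)
  qed simp
  then show "(R \<union> {(a, b), (b, a)})\<^sup>* `` {u} \<subseteq> R\<^sup>* `` {u}" by blast
qed (use rtrancl_mono[of R "R \<union> {(a, b), (b, a)}"] in blast)

text \<open>The classes avoiding a and b survive the new link, and the new class of a is not among
  them, so at most the two classes of a and b are lost and one is gained.\<close>
lemma card_rtrancl_classes_insert_pair:
  assumes "finite V" "sym R" "a \<in> V"
  shows "card (rtrancl_classes V R) \<le> card (rtrancl_classes V (R \<union> {(a, b), (b, a)})) + 1"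
proof -
  define R' where "R' = R \<union> {(a, b), (b, a)}"
  define Q where "Q = rtrancl_classes V R - {R\<^sup>* `` {a}, R\<^sup>* `` {b}}"
  have "Q \<subseteq> rtrancl_classes V R'"
  proof
    fix C assume "C \<in> Q"
    then obtain u where u: "u \<in> V" "C = R\<^sup>* `` {u}" "C \<noteq> R\<^sup>* `` {a}" "C \<noteq> R\<^sup>* `` {b}"
      unfolding Q_def rtrancl_classes_def by auto
    then have "u \<notin> R\<^sup>* `` {a}" "u \<notin> R\<^sup>* `` {b}"
      using rtrancl_Image_eq[OF assms(2)] by metis+
    then have "C = R'\<^sup>* `` {u}"
      unfolding R'_def u(2) by (rule rtrancl_Image_insert_pair[OF assms(2), symmetric])
    then show "C \<in> rtrancl_classes V R'" using u(1) unfolding rtrancl_classes_def by blast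
  qed
  moreover have "R'\<^sup>* `` {a} \<notin> Q"
  proof
    assume "R'\<^sup>* `` {a} \<in> Q"
    then obtain u where "R'\<^sup>* `` {a} = R\<^sup>* `` {u}" "R\<^sup>* `` {u} \<noteq> R\<^sup>* `` {a}"
      unfolding Q_def rtrancl_classes_def by auto
    moreover have "a \<in> R'\<^sup>* `` {a}" by simp
    ultimately show False using rtrancl_Image_eq[OF assms(2), of a u] by simp
  qed
  moreover have "R'\<^sup>* `` {a} \<in> rtrancl_classes V R'"
    using assms(3) unfolding rtrancl_classes_def by blast
  ultimately have "insert (R'\<^sup>* `` {a}) Q \<subseteq> rtrancl_classes V R'" by blast
  then have "card (insert (R'\<^sup>* `` {a}) Q) \<le> card (rtrancl_classes V R')"
    by (rule card_mono[OF finite_rtrancl_classes[OF assms(1)]])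
  moreover have "finite Q" unfolding Q_def using finite_rtrancl_classes[OF assms(1)] by simp
  ultimately have "card Q + 1 \<le> card (rtrancl_classes V R')"
    using \<open>R'\<^sup>* `` {a} \<notin> Q\<close> by simp
  moreover have "card (rtrancl_classes V R) \<le> card Q + 2"
  proof -
    have "card (rtrancl_classes V R) - card {R\<^sup>* `` {a}, R\<^sup>* `` {b}} \<le> card Q"
      unfolding Q_def by (rule diff_card_le_card_Diff) simp
    then show ?thesis using card_doubleton_le[of "R\<^sup>* `` {a}" "R\<^sup>* `` {b}"] by linarith
  qed
  ultimately show ?thesis unfolding R'_def by linarith
qed

lemma card_rtrancl_classes_Un_edge_rel:
  assumes "finite F" "finite V" "sym R" "\<forall>e\<in>F. inc G e \<subseteq> V"
  shows "card (rtrancl_classes V R) \<le> card (rtrancl_classes V (R \<union> edge_rel G F)) + card F"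
  using assms(1,4)
proof (induction F rule: finite_induct)
  case (insert e F)
  let ?R = "R \<union> edge_rel G F"
  have "card (rtrancl_classes V ?R) \<le> card (rtrancl_classes V (R \<union> edge_rel G (insert e F))) + 1"
  proof (cases "\<exists>a b. inc G e = {a, b}")
    case True
    then obtain a b where ab: "inc G e = {a, b}" by blast
    then have "R \<union> edge_rel G (insert e F) = ?R \<union> {(a, b), (b, a)}"
      unfolding edge_rel_insert by (auto simp: doubleton_eq_iff)
    moreover have "a \<in> V" using insert.prems ab by auto
    ultimately show ?thesis
      using card_rtrancl_classes_insert_pair[OF assms(2) sym_Un[OF assms(3) sym_edge_rel]] by simp
  next
    case False
    then have "R \<union> edge_rel G (insert e F) = ?R" unfolding edge_rel_insert by auto
    then show ?thesis by simp
  qed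
  then show ?case using insert by simp
qed (simp add: edge_rel_def)

lemma rtrancl_map:
  assumes "\<forall>(x, y)\<in>R. (f x, f y) \<in> R" "(x, y) \<in> R\<^sup>*"
  shows "(f x, f y) \<in> R\<^sup>*"
  using assms(2) by induction (use assms(1) in \<open>auto intro: rtrancl_into_rtrancl\<close>)

lemma card_add_card_le_twice_card_image:
  assumes "finite M" "g ` Q = M" "S \<subseteq> M"
    and "\<And>D. D \<in> M \<Longrightarrow> card {C \<in> Q. g C = D} \<le> 2"
    and "\<And>D. D \<in> S \<Longrightarrow> card {C \<in> Q. g C = D} \<le> 1"
  shows "card Q + card S \<le> 2 * card M"
proof -
  have "Q = (\<Union>D\<in>M. {C \<in> Q. g C = D})" using assms(2) by blast
  then have "card Q \<le> (\<Sum>D\<in>M. card {C \<in> Q. g C = D})"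
    using card_UN_le[OF assms(1), of "\<lambda>D. {C \<in> Q. g C = D}"] by simp
  also have "\<dots> \<le> (\<Sum>D\<in>M. if D \<in> S then 1 else 2)"
    using assms(4,5) by (intro sum_mono) simp
  also have "\<dots> = card S + 2 * card (M - S)"
  proof -
    have "M \<inter> {D. D \<in> S} = S" "M \<inter> - {D. D \<in> S} = M - S" using assms(3) by auto
    then show ?thesis using sum.If_cases[OF assms(1), of "\<lambda>D. D \<in> S" "\<lambda>_. 1::nat" "\<lambda>_. 2"] by simp
  qed
  finally have "card Q \<le> card S + 2 * card (M - S)" .
  moreover have "card M = card S + card (M - S)"
    using card_Diff_subset[OF finite_subset[OF assms(3,1)] assms(3)] card_mono[OF assms(1,3)]
    by linarith
  ultimately show ?thesis by linarith
qed

context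
  fixes V :: "'v set" and R :: "('v \<times> 'v) set" and f :: "'v \<Rightarrow> 'v"
  assumes R_subset: "R \<subseteq> V \<times> V"
    and involution: "\<forall>x\<in>V. f x \<in> V \<and> f (f x) = x"
    and R_map: "\<forall>(x, y)\<in>R. (f x, f y) \<in> R"
begin

lemma image_rtrancl_Image_involution:
  assumes "u \<in> V"
  shows "f ` (R\<^sup>* `` {u}) = R\<^sup>* `` {f u}"
proof
  show "f ` (R\<^sup>* `` {u}) \<subseteq> R\<^sup>* `` {f u}" using rtrancl_map[OF R_map] by blast
  show "R\<^sup>* `` {f u} \<subseteq> f ` (R\<^sup>* `` {u})"
  proof
    fix w assume w: "w \<in> R\<^sup>* `` {f u}"
    then have "w \<in> V" using rtrancl_Image_subset[OF R_subset] involution assms by blast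
    moreover have "(f (f u), f w) \<in> R\<^sup>*" using rtrancl_map[OF R_map] w by simp
    ultimately show "w \<in> f ` (R\<^sup>* `` {u})" using involution assms by force
  qed
qed

lemma rtrancl_Image_Un_involution:
  assumes "u \<in> V"
  shows "(R \<union> {(x, f x) | x. x \<in> V})\<^sup>* `` {u} = R\<^sup>* `` {u} \<union> R\<^sup>* `` {f u}"
proof
  let ?T = "{(x, f x) | x. x \<in> V}"
  have "(u, w) \<in> R\<^sup>* \<or> (f u, w) \<in> R\<^sup>*" if "(u, w) \<in> (R \<union> ?T)\<^sup>*" for w
    using that
  proof (induction rule: rtrancl_induct)
    case (step y z)
    show ?case
    proof (cases "(y, z) \<in> R")
      case True
      then show ?thesis using step.IH by (auto intro: rtrancl_into_rtrancl)
    next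
      case False
      then have "z = f y" using step.hyps(2) by auto
      then show ?thesis
        using step.IH rtrancl_map[OF R_map, of u y] rtrancl_map[OF R_map, of "f u" y] involution assms
        by auto
    qed
  qed simp
  then show "(R \<union> ?T)\<^sup>* `` {u} \<subseteq> R\<^sup>* `` {u} \<union> R\<^sup>* `` {f u}" by blast
  have "(u, f u) \<in> (R \<union> ?T)\<^sup>*" using assms by blast
  then show "R\<^sup>* `` {u} \<union> R\<^sup>* `` {f u} \<subseteq> (R \<union> ?T)\<^sup>* `` {u}"
    using rtrancl_mono[of R "R \<union> ?T"] by (blast intro: rtrancl_trans)
qed

text \<open>Each class of the coarser relation is the union of at most two classes of R, and of exactly
  one if it is an f-invariant R-class.\<close>
lemma card_rtrancl_classes_Un_involution:
  assumes "finite V" "sym R"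
    and St: "St \<subseteq> rtrancl_classes V R" "\<forall>C\<in>St. f ` C = C"
  shows "card (rtrancl_classes V R) + card St
    \<le> 2 * card (rtrancl_classes V (R \<union> {(x, f x) | x. x \<in> V}))"
proof -
  let ?T = "{(x, f x) | x. x \<in> V}"
  define Q where "Q = rtrancl_classes V R"
  define M where "M = rtrancl_classes V (R \<union> ?T)"
  define g where "g C = C \<union> f ` C" for C
  have g_class: "g (R\<^sup>* `` {u}) = (R \<union> ?T)\<^sup>* `` {u}" if "u \<in> V" for u
    unfolding g_def image_rtrancl_Image_involution[OF that] rtrancl_Image_Un_involution[OF that] ..
  have gQ: "g ` Q = M"
    unfolding Q_def M_def rtrancl_classes_def image_image by (rule image_cong[OF refl g_class])
  have fib_class: "\<exists>w. C = R\<^sup>* `` {w} \<and> w \<in> D" if "C \<in> {C \<in> Q. g C = D}" for C D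
    using that unfolding Q_def rtrancl_classes_def g_def by auto
  have fibre_le_2: "card {C \<in> Q. g C = D} \<le> 2" if "D \<in> M" for D
  proof -
    obtain u where u: "u \<in> V" "D = R\<^sup>* `` {u} \<union> R\<^sup>* `` {f u}"
      using \<open>D \<in> M\<close> rtrancl_Image_Un_involution unfolding M_def rtrancl_classes_def by auto
    have "{C \<in> Q. g C = D} \<subseteq> {R\<^sup>* `` {u}, R\<^sup>* `` {f u}}"
    proof
      fix C assume "C \<in> {C \<in> Q. g C = D}"
      then obtain w where w: "C = R\<^sup>* `` {w}" "w \<in> R\<^sup>* `` {u} \<or> w \<in> R\<^sup>* `` {f u}"
        using fib_class u(2) by blast
      then show "C \<in> {R\<^sup>* `` {u}, R\<^sup>* `` {f u}}"
        using rtrancl_Image_eq[OF assms(2), of w u] rtrancl_Image_eq[OF assms(2), of w "f u"] by blast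
    qed
    then have "card {C \<in> Q. g C = D} \<le> card {R\<^sup>* `` {u}, R\<^sup>* `` {f u}}"
      by (rule card_mono[rotated]) simp
    then show ?thesis using card_doubleton_le[of "R\<^sup>* `` {u}" "R\<^sup>* `` {f u}"] by linarith
  qed
  have fibre_le_1: "card {C \<in> Q. g C = D} \<le> 1" if "D \<in> St" for D
  proof -
    obtain u where u: "D = R\<^sup>* `` {u}"
      using \<open>D \<in> St\<close> St(1) unfolding rtrancl_classes_def by auto
    have "{C \<in> Q. g C = D} \<subseteq> {D}"
    proof
      fix C assume "C \<in> {C \<in> Q. g C = D}"
      then obtain w where "C = R\<^sup>* `` {w}" "w \<in> R\<^sup>* `` {u}" using fib_class u by blast
      then show "C \<in> {D}" using rtrancl_Image_eq[OF assms(2), of w u] u by simp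
    qed
    then show ?thesis using card_mono[of "{D}"] by simp
  qed
  have "St \<subseteq> M"
  proof
    fix D assume "D \<in> St"
    then have "D = g D" "D \<in> Q" using St unfolding g_def Q_def by auto
    then show "D \<in> M" using gQ by blast
  qed
  moreover have "finite M" unfolding M_def using finite_rtrancl_classes[OF assms(1)] .
  ultimately have "card Q + card St \<le> 2 * card M"
    using card_add_card_le_twice_card_image[OF _ gQ _ fibre_le_2 fibre_le_1] by blast
  then show ?thesis unfolding Q_def M_def .
qed

end

lemma card_orbits_involution:
  assumes "finite X" "\<forall>x\<in>X. f x \<in> X \<and> f (f x) = x \<and> f x \<noteq> x"
  shows "card X = 2 * card ((\<lambda>x. {x, f x}) ` X)"
proof -
  let ?O = "(\<lambda>x. {x, f x}) ` X"
  have orbit: "{x, f x} = {z, f z}" if "x \<in> X" "z \<in> {x, f x}" for x z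
    using that assms(2) by (cases "z = x") (auto simp: insert_commute)
  have "2 * card ?O = card (\<Union>?O)"
  proof (rule card_partition)
    show "finite ?O" "finite (\<Union>?O)" using assms(1) by simp_all
    show "card c = 2" if "c \<in> ?O" for c using that assms(2) by auto
    show "c1 \<inter> c2 = {}" if c: "c1 \<in> ?O" "c2 \<in> ?O" "c1 \<noteq> c2" for c1 c2
    proof (rule ccontr)
      assume "c1 \<inter> c2 \<noteq> {}"
      then obtain z where "z \<in> c1" "z \<in> c2" by blast
      then have "c1 = {z, f z}" "c2 = {z, f z}" using c(1,2) orbit by blast+
      then show False using c(3) by simp
    qed
  qed
  moreover have "\<Union>?O = X" using assms(2) by blast
  ultimately show ?thesis by simp
qed

lemma obtain_orbit_representatives:
  assumes "finite X" "\<forall>x\<in>X. f x \<in> X"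
  obtains F where "F \<subseteq> X" "card F \<le> card ((\<lambda>x. {x, f x}) ` X)" "\<forall>x\<in>X. x \<in> F \<or> f x \<in> F"
proof
  define F where "F = (\<lambda>A. SOME y. y \<in> A) ` (\<lambda>x. {x, f x}) ` X"
  have rep: "(SOME y. y \<in> {x, f x}) \<in> {x, f x}" for x by (rule someI[of _ x]) simp
  have "(SOME y. y \<in> {x, f x}) \<in> X" if "x \<in> X" for x using rep[of x] that assms(2) by auto
  then show "F \<subseteq> X" unfolding F_def image_image by blast
  show "card F \<le> card ((\<lambda>x. {x, f x}) ` X)" unfolding F_def using assms(1) by (simp add: card_image_le)
  show "\<forall>x\<in>X. x \<in> F \<or> f x \<in> F"
  proof
    fix x assume "x \<in> X"
    then have "(SOME y. y \<in> {x, f x}) \<in> F" unfolding F_def by blast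
    then show "x \<in> F \<or> f x \<in> F" using rep[of x] by auto
  qed
qed

lemma walk_rtrancl_edge_rel: "is_walk G vs es \<Longrightarrow> (hd vs, last vs) \<in> (edge_rel G (set es))\<^sup>*"
proof (induction es arbitrary: vs)
  case Nil
  then obtain x where "vs = [x]" unfolding is_walk_def by (cases vs) auto
  then show ?case by simp
next
  case (Cons e es)
  then obtain x y vs' where vs: "vs = x # y # vs'"
    unfolding is_walk_def by (metis Suc_length_conv)
  have "is_walk G (y # vs') es" using Cons.prems unfolding vs is_walk_def by auto
  then have "(y, last vs) \<in> (edge_rel G (set es))\<^sup>*" using Cons.IH vs by fastforce
  then have "(y, last vs) \<in> (edge_rel G (set (e # es)))\<^sup>*"
    using rtrancl_mono[OF edge_rel_mono[of "set es" "set (e # es)"]] by auto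
  moreover have "(x, y) \<in> edge_rel G (set (e # es))"
    using Cons.prems unfolding vs is_walk_def edge_rel_def by force
  ultimately show ?case unfolding vs by (auto intro: converse_rtrancl_into_rtrancl)
qed

lemma walk_inc_subset:
  assumes "is_walk G vs es" "e \<in> set es"
  shows "inc G e \<subseteq> set vs"
proof -
  obtain i where i: "i < length es" "e = es ! i" using assms(2) by (auto simp: in_set_conv_nth)
  then have "inc G e = {vs ! i, vs ! Suc i}" "Suc i < length vs"
    using assms(1) unfolding is_walk_def by simp_all
  then show ?thesis by simp
qed

lemma is_walk_snoc:
  assumes "is_walk G vs es" "e \<in> edges G" "inc G e = {last vs, w}" "w \<in> verts G"
  shows "is_walk G (vs @ [w]) (es @ [e])"
proof -
  have len: "length vs = Suc (length es)" using assms(1) unfolding is_walk_def by simp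
  then have "last vs = vs ! length es" by (cases vs rule: rev_cases) (auto simp: nth_append)
  then show ?thesis using assms len unfolding is_walk_def by (auto simp: nth_append less_Suc_eq)
qed

lemma joined_refl: "u \<in> verts G \<Longrightarrow> joined G u u"
  unfolding joined_def is_walk_def by (intro exI[of _ "[u]"] exI[of _ "[]"]) auto

lemma joined_iff_rtrancl:
  assumes "\<forall>e\<in>edges G. inc G e \<subseteq> verts G"
  shows "joined G u v \<longleftrightarrow> u \<in> verts G \<and> (u, v) \<in> (edge_rel G (edges G))\<^sup>*"
proof
  assume "joined G u v"
  then obtain vs es where w: "is_walk G vs es" "hd vs = u" "last vs = v" unfolding joined_def by blast
  then have "u \<in> verts G" unfolding is_walk_def by (metis hd_in_set list.size(3) nat.distinct(1) subsetD)
  moreover have "set es \<subseteq> edges G" using w(1) unfolding is_walk_def by simp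
  ultimately show "u \<in> verts G \<and> (u, v) \<in> (edge_rel G (edges G))\<^sup>*"
    using walk_rtrancl_edge_rel[OF w(1)] rtrancl_mono[OF edge_rel_mono] w by blast
next
  assume u: "u \<in> verts G \<and> (u, v) \<in> (edge_rel G (edges G))\<^sup>*"
  then show "joined G u v"
  proof (induction rule: rtrancl_induct[OF conjunct2[OF u]])
    case 1
    show ?case using u by (simp add: joined_refl)
  next
    case (2 y z)
    then obtain vs es where w: "is_walk G vs es" "hd vs = u" "last vs = y" unfolding joined_def by blast
    obtain e where e: "e \<in> edges G" "inc G e = {y, z}" using 2 unfolding edge_rel_def by blast
    have "is_walk G (vs @ [z]) (es @ [e])" using is_walk_snoc[OF w(1) e(1)] e assms w(3) by auto
    moreover have "vs \<noteq> []" using w(1) unfolding is_walk_def by auto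
    ultimately show ?case unfolding joined_def using w by (intro exI[of _ "vs @ [z]"]) auto
  qed
qed

lemma components_eq_rtrancl_classes:
  assumes "\<forall>e\<in>edges H. inc H e \<subseteq> verts H"
  shows "components H = rtrancl_classes (verts H) (edge_rel H (edges H))"
  unfolding components_def rtrancl_classes_def
proof (rule image_cong[OF refl])
  fix u assume u: "u \<in> verts H"
  have "(edge_rel H (edges H))\<^sup>* `` {u} \<subseteq> verts H"
    by (rule rtrancl_Image_subset[OF edge_rel_subset[OF assms] u])
  then show "{v \<in> verts H. joined H u v} = (edge_rel H (edges H))\<^sup>* `` {u}"
    unfolding joined_iff_rtrancl[OF assms] using u by blast
qed

lemma is_graph_edges_subset: "is_graph H \<Longrightarrow> \<forall>e\<in>edges H. inc H e \<subseteq> verts H"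
  unfolding is_graph_def by simp

lemma components_meet:
  assumes "is_graph H" "C1 \<in> components H" "C2 \<in> components H" "x \<in> C1" "x \<in> C2"
  shows "C1 = C2"
proof -
  obtain u1 u2 where "C1 = (edge_rel H (edges H))\<^sup>* `` {u1}" "C2 = (edge_rel H (edges H))\<^sup>* `` {u2}"
    using assms(2,3)
    unfolding components_eq_rtrancl_classes[OF is_graph_edges_subset[OF assms(1)]] rtrancl_classes_def
    by blast
  then show ?thesis
    using rtrancl_Image_meet[OF sym_edge_rel, where x = x and u = u1 and w = u2] assms(4,5) by simp
qed

lemma components_subset: "C \<in> components H \<Longrightarrow> C \<subseteq> verts H"
  unfolding components_def by blast

lemma Union_components: "\<Union>(components H) = verts H"
proof
  show "\<Union>(components H) \<subseteq> verts H" using components_subset by blast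
  show "verts H \<subseteq> \<Union>(components H)"
  proof
    fix u assume "u \<in> verts H"
    then have "u \<in> {v \<in> verts H. joined H u v}" by (simp add: joined_refl)
    then show "u \<in> \<Union>(components H)" unfolding components_def using \<open>u \<in> verts H\<close> by blast
  qed
qed

lemma genus_nonneg:
  assumes "is_graph H"
  shows "0 \<le> genus H"
proof -
  have "card (rtrancl_classes (verts H) {})
      \<le> card (rtrancl_classes (verts H) ({} \<union> edge_rel H (edges H))) + card (edges H)"
    using assms unfolding is_graph_def
    by (intro card_rtrancl_classes_Un_edge_rel) (auto simp: sym_def)
  then show ?thesis
    unfolding genus_def card_rtrancl_classes_empty
      components_eq_rtrancl_classes[OF is_graph_edges_subset[OF assms]] by simp
qed

lemma is_graph_comp_subgraph: "is_graph H \<Longrightarrow> C \<subseteq> verts H \<Longrightarrow> is_graph (comp_subgraph H C)"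
  unfolding is_graph_def comp_subgraph_def by (auto intro: finite_subset)

lemma comp_subgraph_simps [simp]:
  "verts (comp_subgraph H C) = C" "edges (comp_subgraph H C) = {e \<in> edges H. inc H e \<subseteq> C}"
  "inc (comp_subgraph H C) = inc H"
  unfolding comp_subgraph_def by simp_all

lemma components_comp_subgraph:
  assumes "is_graph H" "C \<in> components H"
  shows "components (comp_subgraph H C) = {C}"
proof -
  let ?A = "edge_rel H (edges H)" and ?AC = "edge_rel H {e \<in> edges H. inc H e \<subseteq> C}"
  obtain u0 where C: "C = ?A\<^sup>* `` {u0}"
    using assms(2)
    unfolding components_eq_rtrancl_classes[OF is_graph_edges_subset[OF assms(1)]] rtrancl_classes_def
    by blast
  have C_class: "?A\<^sup>* `` {u} = C" if "u \<in> C" for u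
    unfolding C by (rule rtrancl_Image_eq[OF sym_edge_rel that[unfolded C]])
  have AC_class: "?AC\<^sup>* `` {u} = C" if u: "u \<in> C" for u
  proof
    show "?AC\<^sup>* `` {u} \<subseteq> C" by (rule rtrancl_Image_subset[OF edge_rel_subset u]) simp
    have "(u, w) \<in> ?AC\<^sup>*" if "(u, w) \<in> ?A\<^sup>*" for w
      using that
    proof (induction rule: rtrancl_induct)
      case (step y z)
      obtain e where e: "e \<in> edges H" "inc H e = {y, z}"
        using step.hyps(2) by (auto simp: edge_rel_def)
      have "(u, z) \<in> ?A\<^sup>*" using step.hyps by (rule rtrancl_into_rtrancl)
      then have "{y, z} \<subseteq> C" using step.hyps(1) C_class[OF u] by auto
      then have "(y, z) \<in> ?AC" using e by (auto simp: edge_rel_def)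
      then show ?case using step.IH by (rule rtrancl_into_rtrancl[rotated])
    qed simp
    then show "C \<subseteq> ?AC\<^sup>* `` {u}" unfolding C_class[OF u, symmetric] by (simp add: subset_iff)
  qed
  have "components (comp_subgraph H C) = (\<lambda>u. ?AC\<^sup>* `` {u}) ` C"
    using components_eq_rtrancl_classes[of "comp_subgraph H C"]
    unfolding rtrancl_classes_def by (simp add: edge_rel_cong[of "comp_subgraph H C" H])
  also have "\<dots> = (\<lambda>u. C) ` C" using AC_class by (rule image_cong[OF refl])
  also have "\<dots> = {C}" by (rule image_constant[of u0]) (simp add: C)
  finally show ?thesis .
qed

lemma is_graph_inc_doubleton:
  assumes "is_graph H" "e \<in> edges H"
  obtains a b where "inc H e = {a, b}"
proof -
  have "card (inc H e) = 1 \<or> card (inc H e) = 2" using assms unfolding is_graph_def by blast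
  then show ?thesis
  proof
    assume "card (inc H e) = 1"
    then obtain a where "inc H e = {a}" by (auto simp: card_1_singleton_iff)
    then show ?thesis using that[of a a] by simp
  next
    assume "card (inc H e) = 2"
    then show ?thesis using that by (auto simp: card_2_iff)
  qed
qed

lemma edge_subset_component:
  assumes "is_graph H" "C \<in> components H" "e \<in> edges H" "x \<in> inc H e" "x \<in> C"
  shows "inc H e \<subseteq> C"
proof -
  let ?A = "edge_rel H (edges H)"
  obtain a b where ab: "inc H e = {a, b}" using is_graph_inc_doubleton[OF assms(1,3)] .
  then have "(a, b) \<in> ?A" "(b, a) \<in> ?A" using assms(3) unfolding edge_rel_def by (auto simp: insert_commute)
  moreover obtain u where C: "C = ?A\<^sup>* `` {u}"
    using assms(2)
    unfolding components_eq_rtrancl_classes[OF is_graph_edges_subset[OF assms(1)]] rtrancl_classes_def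
    by blast
  moreover have "x = a \<or> x = b" using assms(4) ab by simp
  ultimately have "a \<in> C" "b \<in> C" using assms(5) by (auto intro: rtrancl_into_rtrancl)
  then show ?thesis using ab by simp
qed

lemma sum_card_components:
  assumes "is_graph H"
  shows "(\<Sum>C\<in>components H. card C) = card (verts H)"
proof -
  have "pairwise disjnt (components H)"
    unfolding pairwise_def disjnt_def using components_meet[OF assms] by blast
  moreover have "finite C" if "C \<in> components H" for C
    using components_subset[OF that] assms unfolding is_graph_def by (blast intro: finite_subset)
  ultimately have "card (\<Union>(components H)) = (\<Sum>C\<in>components H. card C)"
    by (rule card_Union_disjoint)
  then show ?thesis unfolding Union_components by simp
qed

lemma sum_card_component_edges:
  assumes "is_graph H"
  shows "(\<Sum>C\<in>components H. card {e \<in> edges H. inc H e \<subseteq> C}) = card (edges H)"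
proof -
  let ?EC = "\<lambda>C. {e \<in> edges H. inc H e \<subseteq> C}"
  have "edges H \<subseteq> (\<Union>C\<in>components H. ?EC C)"
  proof
    fix e assume e: "e \<in> edges H"
    obtain a b where ab: "inc H e = {a, b}" using is_graph_inc_doubleton[OF assms e] .
    have "inc H e \<subseteq> verts H" using e is_graph_edges_subset[OF assms] by blast
    then have "a \<in> \<Union>(components H)" using ab by (simp add: Union_components)
    then obtain C where "C \<in> components H" "a \<in> C" by blast
    moreover have "inc H e \<subseteq> C"
      using edge_subset_component[OF assms calculation(1) e _ calculation(2)] ab by simp
    ultimately show "e \<in> (\<Union>C\<in>components H. ?EC C)" using e by blast
  qed
  then have union: "(\<Union>C\<in>components H. ?EC C) = edges H" by auto
  have disjoint: "?EC C1 \<inter> ?EC C2 = {}"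
    if "C1 \<in> components H" "C2 \<in> components H" "C1 \<noteq> C2" for C1 C2
  proof (rule ccontr)
    assume "?EC C1 \<inter> ?EC C2 \<noteq> {}"
    then obtain e where e: "e \<in> edges H" "inc H e \<subseteq> C1" "inc H e \<subseteq> C2" by blast
    obtain a b where "inc H e = {a, b}" using is_graph_inc_doubleton[OF assms e(1)] .
    then have "a \<in> C1" "a \<in> C2" using e by simp_all
    then show False using components_meet[OF assms that(1,2)] that(3) by simp
  qed
  have "finite (components H)" "finite (edges H)"
    using assms unfolding is_graph_def components_def by simp_all
  then have "card (\<Union>C\<in>components H. ?EC C) = (\<Sum>C\<in>components H. card (?EC C))"
    by (intro card_UN_disjoint) (use disjoint in auto)
  then show ?thesis unfolding union by simp
qed

lemma sum_genus_components:
  assumes "is_graph H"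
  shows "(\<Sum>C\<in>components H. genus (comp_subgraph H C) + 1)
    = 2 * int (card (components H)) + int (card (edges H)) - int (card (verts H))"
proof -
  let ?EC = "\<lambda>C. {e \<in> edges H. inc H e \<subseteq> C}"
  have "(\<Sum>C\<in>components H. genus (comp_subgraph H C) + 1)
      = (\<Sum>C\<in>components H. 2 + int (card (?EC C)) - int (card C))"
  proof (rule sum.cong[OF refl])
    fix C assume "C \<in> components H"
    then show "genus (comp_subgraph H C) + 1 = 2 + int (card (?EC C)) - int (card C)"
      using components_comp_subgraph[OF assms] unfolding genus_def by simp
  qed
  also have "\<dots> = 2 * int (card (components H)) + int (\<Sum>C\<in>components H. card (?EC C))
      - int (\<Sum>C\<in>components H. card C)"
    by (simp add: sum.distrib sum_subtractf of_nat_sum)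
  finally show ?thesis unfolding sum_card_components[OF assms] sum_card_component_edges[OF assms] .
qed

lemma rtrancl_classes_connected:
  assumes "is_graph G" "connected_graph G" "edge_rel G (edges G) \<subseteq> R\<^sup>*" "R \<subseteq> verts G \<times> verts G"
  shows "rtrancl_classes (verts G) R = {verts G}"
proof -
  have "R\<^sup>* `` {u} = verts G" if u: "u \<in> verts G" for u
  proof
    show "R\<^sup>* `` {u} \<subseteq> verts G" by (rule rtrancl_Image_subset[OF assms(4) u])
    show "verts G \<subseteq> R\<^sup>* `` {u}"
    proof
      fix w assume "w \<in> verts G"
      then have "joined G u w" using assms(2) u unfolding connected_graph_def by blast
      then have "(u, w) \<in> (edge_rel G (edges G))\<^sup>*"
        unfolding joined_iff_rtrancl[OF is_graph_edges_subset[OF assms(1)]] by simp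
      then have "(u, w) \<in> R\<^sup>*" using rtrancl_subset_rtrancl[OF assms(3)] by blast
      then show "w \<in> R\<^sup>* `` {u}" by simp
    qed
  qed
  then have "rtrancl_classes (verts G) R = (\<lambda>u. verts G) ` verts G"
    unfolding rtrancl_classes_def by (rule image_cong[OF refl])
  also have "\<dots> = {verts G}" using assms(2) unfolding connected_graph_def by blast
  finally show ?thesis .
qed

locale real_graph =
  fixes G :: "('v, 'e) graph" and iV :: "'v \<Rightarrow> 'v" and iE :: "'e \<Rightarrow> 'e"
  assumes graph: "is_graph G" and connected: "connected_graph G"
    and real_structure: "real_structure G iV iE"
begin

abbreviation "V \<equiv> verts G"
abbreviation "E \<equiv> edges G"
abbreviation "V_real \<equiv> real_verts G iV"
abbreviation "V_cplx \<equiv> V - V_real"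
abbreviation "E_real \<equiv> {e \<in> E. iE e = e \<and> inc G e \<subseteq> V_real}"
abbreviation "E_iso \<equiv> isolated_real_edges G iV iE"
abbreviation "E_away \<equiv> {e \<in> E. iE e \<noteq> e \<and> inc G e \<inter> V_real = {}}"
abbreviation "E_touch \<equiv> {e \<in> E. iE e \<noteq> e \<and> inc G e \<inter> V_real \<noteq> {}}"
abbreviation "RL \<equiv> real_locus G iV iE"
abbreviation "R_real \<equiv> edge_rel G E_real"
abbreviation "R_pure \<equiv> edge_rel G (E_real \<union> E_away)"
abbreviation "R_conj \<equiv> {(x, iV x) | x. x \<in> V}"

lemma finite_V: "finite V" and finite_E: "finite E"
  using graph unfolding is_graph_def by simp_all

lemma inc_subset: "e \<in> E \<Longrightarrow> inc G e \<subseteq> V"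
  using graph unfolding is_graph_def by simp

lemma iV_closed: "x \<in> V \<Longrightarrow> iV x \<in> V" and iV_iV: "x \<in> V \<Longrightarrow> iV (iV x) = x"
  using real_structure unfolding real_structure_def by simp_all

lemma iE_closed: "e \<in> E \<Longrightarrow> iE e \<in> E" and iE_iE: "e \<in> E \<Longrightarrow> iE (iE e) = e"
  and inc_iE: "e \<in> E \<Longrightarrow> inc G (iE e) = iV ` inc G e"
  using real_structure unfolding real_structure_def by simp_all

lemma real_verts_iff: "x \<in> V_real \<longleftrightarrow> x \<in> V \<and> iV x = x"
  unfolding real_verts_def by simp

lemma real_locus_simps: "verts RL = V_real" "edges RL = E_real" "inc RL = inc G"
  unfolding real_locus_def by simp_all

lemma is_graph_real_locus: "is_graph RL"
  using graph finite_subset[OF _ finite_V, of V_real]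
  unfolding is_graph_def real_locus_simps by (auto simp: real_verts_def)

lemma s_inv_eq:
  "s_inv G iV iE = int (card E_iso) + int (card E_real) + 2 * int (card (components RL))
    - int (card V_real)"
  unfolding s_inv_def sum_genus_components[OF is_graph_real_locus] real_locus_simps by simp

lemma s_inv_ge: "int (card E_iso) + int (card (components RL)) \<le> s_inv G iV iE"
proof -
  have "(\<Sum>C\<in>components RL. 1) \<le> (\<Sum>C\<in>components RL. genus (comp_subgraph RL C) + 1)"
  proof (rule sum_mono)
    fix C assume "C \<in> components RL"
    then show "1 \<le> genus (comp_subgraph RL C) + 1"
      using genus_nonneg[OF is_graph_comp_subgraph[OF is_graph_real_locus components_subset]] by simp
  qed
  then show ?thesis unfolding s_inv_def by simp
qed

lemma genus_eq: "genus G = 1 + int (card E) - int (card V)"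
proof -
  have "components G = (\<lambda>u. V) ` V"
    unfolding components_def using connected unfolding connected_graph_def
    by (intro image_cong) auto
  also have "\<dots> = {V}" using connected unfolding connected_graph_def by auto
  finally show ?thesis unfolding genus_def by simp
qed

lemma card_E_split: "card E = card E_iso + card E_real + card E_away + card E_touch"
proof -
  have "E = ((E_iso \<union> E_real) \<union> E_away) \<union> E_touch"
    unfolding isolated_real_edges_def by auto
  then have "card E = card (((E_iso \<union> E_real) \<union> E_away) \<union> E_touch)" by (rule arg_cong)
  also have "\<dots> = card E_iso + card E_real + card E_away + card E_touch"
  proof -
    have "finite E_iso" "finite E_real" "finite E_away" "finite E_touch"
      using finite_E unfolding isolated_real_edges_def by simp_all
    moreover have "E_iso \<inter> E_real = {}" "(E_iso \<union> E_real) \<inter> E_away = {}"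
      "((E_iso \<union> E_real) \<union> E_away) \<inter> E_touch = {}"
      unfolding isolated_real_edges_def by auto
    ultimately show ?thesis by (simp add: card_Un_disjoint)
  qed
  finally show ?thesis .
qed

lemma card_V_split: "card V = card V_real + card V_cplx"
  using card_Diff_subset[of V_real V] card_mono[OF finite_V, of V_real] finite_subset[OF _ finite_V]
  unfolding real_verts_def by force

lemma iV_real_iff: "x \<in> V \<Longrightarrow> iV x \<in> V_real \<longleftrightarrow> x \<in> V_real"
  unfolding real_verts_def using iV_closed iV_iV by auto

lemma inc_iE_real_empty:
  assumes "e \<in> E"
  shows "inc G (iE e) \<inter> V_real = {} \<longleftrightarrow> inc G e \<inter> V_real = {}"
proof -
  have "iV z \<in> V_real \<longleftrightarrow> z \<in> V_real" if "z \<in> inc G e" for z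
    using iV_real_iff inc_subset[OF assms] that by blast
  then show ?thesis unfolding inc_iE[OF assms] by auto
qed

lemma E_away_closed:
  assumes "e \<in> E_away"
  shows "iE e \<in> E_away"
proof -
  have e: "e \<in> E" "iE e \<noteq> e" "inc G e \<inter> V_real = {}" using assms by simp_all
  then have "iE (iE e) \<noteq> iE e" using iE_iE by simp
  then show ?thesis using iE_closed[OF e(1)] inc_iE_real_empty[OF e(1)] e(3) by simp
qed

lemma E_touch_closed:
  assumes "e \<in> E_touch"
  shows "iE e \<in> E_touch"
proof -
  have e: "e \<in> E" "iE e \<noteq> e" "inc G e \<inter> V_real \<noteq> {}" using assms by simp_all
  then have "iE (iE e) \<noteq> iE e" using iE_iE by simp
  then show ?thesis using iE_closed[OF e(1)] inc_iE_real_empty[OF e(1)] e(3) by simp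
qed

lemma card_E_away: "card E_away = 2 * card ((\<lambda>e. {e, iE e}) ` E_away)"
  by (rule card_orbits_involution) (use finite_E E_away_closed iE_iE in auto)

lemma card_E_touch: "card E_touch = 2 * card ((\<lambda>e. {e, iE e}) ` E_touch)"
  by (rule card_orbits_involution) (use finite_E E_touch_closed iE_iE in auto)

lemma card_V_cplx: "card V_cplx = 2 * card ((\<lambda>x. {x, iV x}) ` V_cplx)"
  by (rule card_orbits_involution) (use finite_V iV_closed iV_iV iV_real_iff real_verts_iff in auto)

lemma R_real_subset: "R_real \<subseteq> V_real \<times> V_real"
  by (rule edge_rel_subset) blast

lemma rtrancl_R_real_cplx: "u \<notin> V_real \<Longrightarrow> R_real\<^sup>* `` {u} = {u}"
  using R_real_subset by (intro Image_closed_trancl) blast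

lemma components_real_locus: "components RL = rtrancl_classes V_real R_real"
  using components_eq_rtrancl_classes[OF is_graph_edges_subset[OF is_graph_real_locus]]
  unfolding real_locus_simps edge_rel_cong[OF real_locus_simps(3)] .

lemma finite_components_RL: "finite (components RL)"
  unfolding components_real_locus using finite_subset[OF _ finite_V, of V_real]
  by (simp add: finite_rtrancl_classes real_verts_def)

lemma card_classes_R_real:
  "card (rtrancl_classes V R_real) = card (components RL) + card V_cplx"
proof -
  have "V = V_real \<union> V_cplx" unfolding real_verts_def by blast
  then have "rtrancl_classes V R_real
      = rtrancl_classes V_real R_real \<union> (\<lambda>u. R_real\<^sup>* `` {u}) ` V_cplx"
    unfolding rtrancl_classes_def by (metis image_Un)
  also have "(\<lambda>u. R_real\<^sup>* `` {u}) ` V_cplx = (\<lambda>u. {u}) ` V_cplx"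
    by (rule image_cong[OF refl]) (simp add: rtrancl_R_real_cplx)
  finally have split: "rtrancl_classes V R_real = components RL \<union> (\<lambda>u. {u}) ` V_cplx"
    unfolding components_real_locus .
  have "components RL \<inter> (\<lambda>u. {u}) ` V_cplx = {}"
    using components_subset[of _ RL] unfolding real_locus_simps by blast
  moreover note finite_components_RL
  moreover have "finite ((\<lambda>u. {u}) ` V_cplx)" using finite_V by simp
  moreover have "card ((\<lambda>u. {u}) ` V_cplx) = card V_cplx" by (rule card_image) (simp add: inj_on_def)
  ultimately show ?thesis unfolding split by (simp add: card_Un_disjoint)
qed

lemma card_classes_R_pure_ge:
  "card (components RL) + card V_cplx \<le> card (rtrancl_classes V R_pure) + card E_away"
proof -
  have "card (rtrancl_classes V R_real) \<le> card (rtrancl_classes V (R_real \<union> edge_rel G E_away)) + card E_away"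
    by (rule card_rtrancl_classes_Un_edge_rel) (use finite_E finite_V sym_edge_rel inc_subset in auto)
  then show ?thesis unfolding card_classes_R_real edge_rel_Un .
qed

lemma rtrancl_R_pure_real:
  assumes "u \<in> V_real"
  shows "R_pure\<^sup>* `` {u} = R_real\<^sup>* `` {u}"
proof
  have "(u, w) \<in> R_real\<^sup>*" if "(u, w) \<in> R_pure\<^sup>*" for w
    using that
  proof (induction rule: rtrancl_induct)
    case (step y z)
    have "y \<in> V_real" using rtrancl_Image_subset[OF R_real_subset assms] step.IH by blast
    obtain e where e: "e \<in> E_real \<union> E_away" "inc G e = {y, z}"
      using step.hyps(2) by (auto simp: edge_rel_def)
    then have "e \<in> E_real" using \<open>y \<in> V_real\<close> by auto
    then have "(y, z) \<in> R_real" using e(2) by (auto simp: edge_rel_def)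
    then show ?case using step.IH by (rule rtrancl_into_rtrancl[rotated])
  qed simp
  then show "R_pure\<^sup>* `` {u} \<subseteq> R_real\<^sup>* `` {u}" by blast
  show "R_real\<^sup>* `` {u} \<subseteq> R_pure\<^sup>* `` {u}"
    using rtrancl_mono[OF edge_rel_mono[of E_real "E_real \<union> E_away" G]] by blast
qed

lemma components_RL_subset: "components RL \<subseteq> rtrancl_classes V R_pure"
  unfolding components_real_locus rtrancl_classes_def
  using rtrancl_R_pure_real real_verts_iff by (auto intro!: image_eqI)

lemma components_RL_invariant: "C \<in> components RL \<Longrightarrow> iV ` C = C"
  using components_subset[of C RL] unfolding real_locus_simps real_verts_def by force

lemma R_pure_subset: "R_pure \<subseteq> V \<times> V"
  by (rule edge_rel_subset) (use inc_subset in blast)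

lemma R_pure_map: "\<forall>(x, y)\<in>R_pure. (iV x, iV y) \<in> R_pure"
proof clarify
  fix x y assume "(x, y) \<in> R_pure"
  then obtain e where e: "e \<in> E_real \<union> E_away" "inc G e = {x, y}" by (auto simp: edge_rel_def)
  show "(iV x, iV y) \<in> R_pure"
  proof (cases "e \<in> E_real")
    case True
    then have "iV x = x" "iV y = y" using e(2) unfolding real_verts_def by auto
    then show ?thesis using \<open>(x, y) \<in> R_pure\<close> by simp
  next
    case False
    then have "e \<in> E_away" using e(1) by blast
    then have "iE e \<in> E_away" "inc G (iE e) = {iV x, iV y}"
      using E_away_closed[of e] inc_iE[of e] e(2) by simp_all
    then show ?thesis by (auto simp: edge_rel_def)
  qed
qed

lemma isolated_edge_conj:
  assumes "e \<in> E_iso" "inc G e = {x, y}"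
  shows "y = iV x"
proof -
  have e: "e \<in> E" "iE e = e" "\<not> {x, y} \<subseteq> V_real"
    using assms unfolding isolated_real_edges_def by simp_all
  have "{iV x, iV y} = {x, y}" using inc_iE[OF e(1)] e(2) assms(2) by simp
  moreover have "x \<in> V" "y \<in> V" using inc_subset[OF e(1)] assms(2) by simp_all
  ultimately show ?thesis using e(3) iV_iV unfolding real_verts_def doubleton_eq_iff by auto
qed

lemma edge_rel_subset_conj:
  assumes F: "\<forall>e\<in>E_touch. e \<in> F \<or> iE e \<in> F"
  shows "edge_rel G E \<subseteq> (R_pure \<union> R_conj \<union> edge_rel G F)\<^sup>*"
proof clarify
  let ?X = "R_pure \<union> R_conj \<union> edge_rel G F"
  fix x y assume "(x, y) \<in> edge_rel G E"
  then obtain e where e: "e \<in> E" "inc G e = {x, y}" by (auto simp: edge_rel_def)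
  have xy: "x \<in> V" "y \<in> V" using inc_subset[OF e(1)] e(2) by simp_all
  have conj: "(z, iV z) \<in> ?X\<^sup>*" "(iV z, z) \<in> ?X\<^sup>*" if "z \<in> V" for z
  proof -
    have "(z, iV z) \<in> R_conj" "(iV z, iV (iV z)) \<in> R_conj" using that iV_closed by blast+
    then have "(z, iV z) \<in> ?X" "(iV z, z) \<in> ?X" unfolding iV_iV[OF that] by simp_all
    then show "(z, iV z) \<in> ?X\<^sup>*" "(iV z, z) \<in> ?X\<^sup>*" by (simp_all only: r_into_rtrancl)
  qed
  have "e \<in> (E_real \<union> E_away) \<union> E_iso \<union> E_touch"
    using e(1) by (auto simp: isolated_real_edges_def)
  then consider "e \<in> E_real \<union> E_away" | "e \<in> E_iso" | "e \<in> E_touch" by blast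
  then show "(x, y) \<in> ?X\<^sup>*"
  proof cases
    case 1
    then have "(x, y) \<in> R_pure" using e(2) by (auto simp: edge_rel_def)
    then show ?thesis by blast
  next
    case 2
    then show ?thesis using isolated_edge_conj[OF 2 e(2)] conj(1)[OF xy(1)] by simp
  next
    case 3
    then consider "e \<in> F" | "iE e \<in> F" using F by blast
    then show ?thesis
    proof cases
      case 1
      then have "(x, y) \<in> edge_rel G F" using e(2) by (auto simp: edge_rel_def)
      then show ?thesis by blast
    next
      case 2
      moreover have "inc G (iE e) = {iV x, iV y}" using inc_iE[OF e(1)] e(2) by simp
      ultimately have "(iV x, iV y) \<in> ?X\<^sup>*" by (auto simp: edge_rel_def)
      then show ?thesis using conj(1)[OF xy(1)] conj(2)[OF xy(2)] by (meson rtrancl_trans)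
    qed
  qed
qed

lemma card_classes_R_pure_conj:
  "card (rtrancl_classes V (R_pure \<union> R_conj)) \<le> 1 + card ((\<lambda>e. {e, iE e}) ` E_touch)"
proof -
  obtain F where F: "F \<subseteq> E_touch" "card F \<le> card ((\<lambda>e. {e, iE e}) ` E_touch)"
    "\<forall>e\<in>E_touch. e \<in> F \<or> iE e \<in> F"
    using obtain_orbit_representatives[of E_touch iE] finite_E E_touch_closed by auto
  have "card (rtrancl_classes V (R_pure \<union> R_conj))
      \<le> card (rtrancl_classes V (R_pure \<union> R_conj \<union> edge_rel G F)) + card F"
  proof (rule card_rtrancl_classes_Un_edge_rel)
    show "finite F" using F(1) finite_E by (auto intro: finite_subset)
    have "sym R_conj"
    proof (rule symI)
      fix a b assume "(a, b) \<in> R_conj"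
      then have "a \<in> V" "b = iV a" by auto
      then show "(b, a) \<in> R_conj" using iV_closed iV_iV by (auto intro!: exI[of _ "iV a"])
    qed
    then show "sym (R_pure \<union> R_conj)" by (rule sym_Un[OF sym_edge_rel])
    show "\<forall>e\<in>F. inc G e \<subseteq> V" using F(1) inc_subset by auto
  qed (rule finite_V)
  moreover have "rtrancl_classes V (R_pure \<union> R_conj \<union> edge_rel G F) = {V}"
  proof (rule rtrancl_classes_connected[OF graph connected edge_rel_subset_conj[OF F(3)]])
    have "edge_rel G F \<subseteq> V \<times> V" by (rule edge_rel_subset) (use F(1) inc_subset in blast)
    then show "R_pure \<union> R_conj \<union> edge_rel G F \<subseteq> V \<times> V" using R_pure_subset iV_closed by auto
  qed
  ultimately show ?thesis using F(2) by simp
qed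

lemma a_inv_pure_path:
  assumes "a_inv G iV iE = 1"
  obtains v where "v \<in> V" "iV v \<noteq> v" "(v, iV v) \<in> R_pure\<^sup>*"
proof -
  have "\<exists>v\<in>V. iV v \<noteq> v \<and> (\<exists>vs es. is_walk G vs es \<and> hd vs = v \<and> last vs = iV v \<and>
      (\<forall>u\<in>set vs. iV u \<noteq> u) \<and> (\<forall>e\<in>set es. iE e \<noteq> e))"
    using assms unfolding a_inv_def by (metis zero_neq_one)
  then obtain v vs es where v: "v \<in> V" "iV v \<noteq> v"
    and w: "is_walk G vs es" "hd vs = v" "last vs = iV v"
    and cplx: "\<forall>u\<in>set vs. iV u \<noteq> u" "\<forall>e\<in>set es. iE e \<noteq> e"
    by blast
  have "set es \<subseteq> E_away"
  proof
    fix e assume e: "e \<in> set es"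
    then have "e \<in> E" using w(1) unfolding is_walk_def by blast
    moreover have "inc G e \<inter> V_real = {}"
      using walk_inc_subset[OF w(1) e] cplx(1) unfolding real_verts_def by auto
    ultimately show "e \<in> E_away" using cplx(2) e by simp
  qed
  then have "edge_rel G (set es) \<subseteq> R_pure" by (intro edge_rel_mono) blast
  moreover have "(v, iV v) \<in> (edge_rel G (set es))\<^sup>*"
    using walk_rtrancl_edge_rel[OF w(1)] unfolding w(2,3) .
  ultimately have "(v, iV v) \<in> R_pure\<^sup>*" using rtrancl_mono by blast
  then show ?thesis using v by (rule that[rotated 2])
qed

lemma a_inv_invariant_class:
  assumes "a_inv G iV iE = 1"
  obtains K where "K \<in> rtrancl_classes V R_pure" "iV ` K = K" "K \<notin> components RL"
proof -
  obtain v where v: "v \<in> V" "iV v \<noteq> v" "(v, iV v) \<in> R_pure\<^sup>*"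
    using a_inv_pure_path[OF assms] .
  define K where "K = R_pure\<^sup>* `` {v}"
  have "iV ` K = R_pure\<^sup>* `` {iV v}"
    unfolding K_def
    by (rule image_rtrancl_Image_involution[OF R_pure_subset _ R_pure_map v(1)])
      (use iV_closed iV_iV in blast)
  also have "\<dots> = K"
    unfolding K_def by (rule rtrancl_Image_eq[OF sym_edge_rel]) (simp add: v(3))
  finally have invariant: "iV ` K = K" .
  have K_class: "K \<in> rtrancl_classes V R_pure" unfolding K_def rtrancl_classes_def using v(1) by blast
  have not_real: "K \<notin> components RL"
  proof
    assume "K \<in> components RL"
    then have "K \<subseteq> V_real" using components_subset[of K RL] unfolding real_locus_simps by blast
    moreover have "v \<in> K" unfolding K_def by simp
    ultimately show False using v(2) unfolding real_verts_def by auto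
  qed
  show ?thesis using K_class invariant not_real by (rule that)
qed

lemma harnack_bound:
  "2 * card (components RL) + card V_cplx + a_inv G iV iE \<le> card E_away + card E_touch + 2"
proof -
  obtain St where St: "St \<subseteq> rtrancl_classes V R_pure" "\<forall>C\<in>St. iV ` C = C"
    "card St = card (components RL) + a_inv G iV iE"
  proof (cases "a_inv G iV iE = 1")
    case True
    then obtain K where K: "K \<in> rtrancl_classes V R_pure" "iV ` K = K" "K \<notin> components RL"
      by (rule a_inv_invariant_class)
    show ?thesis
    proof (rule that[of "insert K (components RL)"])
      show "insert K (components RL) \<subseteq> rtrancl_classes V R_pure"
        using K(1) components_RL_subset by blast
      show "\<forall>C\<in>insert K (components RL). iV ` C = C" using K(2) components_RL_invariant by blast
      show "card (insert K (components RL)) = card (components RL) + a_inv G iV iE"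
        using True K(3) finite_components_RL by simp
    qed
  next
    case False
    then have "a_inv G iV iE = 0" unfolding a_inv_def by (simp split: if_splits)
    then show ?thesis
      using that[of "components RL"] components_RL_subset components_RL_invariant by simp
  qed
  have "card (rtrancl_classes V R_pure) + card St \<le> 2 * card (rtrancl_classes V (R_pure \<union> R_conj))"
    by (rule card_rtrancl_classes_Un_involution[OF R_pure_subset _ R_pure_map finite_V sym_edge_rel St(1,2)])
      (use iV_closed iV_iV in blast)
  then show ?thesis
    using card_classes_R_pure_conj card_classes_R_pure_ge card_E_touch St(3) by linarith
qed

lemma s_inv_nonzero:
  assumes "a_inv G iV iE = 0"
  shows "s_inv G iV iE \<noteq> 0"
proof
  assume "s_inv G iV iE = 0"
  then have "card E_iso = 0" "card (components RL) = 0" using s_inv_ge by linarith+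
  then have iso: "E_iso = {}" and "components RL = {}"
    using finite_E finite_components_RL unfolding isolated_real_edges_def by auto
  then have real: "V_real = {}" using Union_components[of RL] unfolding real_locus_simps by simp
  obtain v where v: "v \<in> V" using connected unfolding connected_graph_def by blast
  then have "joined G v (iV v)" using connected iV_closed unfolding connected_graph_def by blast
  then obtain vs es where w: "is_walk G vs es" "hd vs = v" "last vs = iV v" unfolding joined_def by blast
  have "\<forall>u\<in>set vs. iV u \<noteq> u" using w(1) real unfolding is_walk_def real_verts_def by auto
  moreover have "\<forall>e\<in>set es. iE e \<noteq> e"
  proof
    fix e assume "e \<in> set es"
    then have "e \<in> E" using w(1) unfolding is_walk_def by auto
    moreover obtain a b where "inc G e = {a, b}" using is_graph_inc_doubleton[OF graph \<open>e \<in> E\<close>] .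
    ultimately show "iE e \<noteq> e" using iso real unfolding isolated_real_edges_def by auto
  qed
  moreover have "iV v \<noteq> v" using v real unfolding real_verts_def by auto
  ultimately have "\<exists>v\<in>V. iV v \<noteq> v \<and> (\<exists>vs es. is_walk G vs es \<and> hd vs = v \<and> last vs = iV v \<and>
      (\<forall>u\<in>set vs. iV u \<noteq> u) \<and> (\<forall>e\<in>set es. iE e \<noteq> e))"
    using v w by blast
  then show False using assms unfolding a_inv_def by simp
qed

end

theorem theorem1:
  fixes G :: "('v, 'e) graph" and iV :: "'v \<Rightarrow> 'v" and iE :: "'e \<Rightarrow> 'e"
  assumes "is_graph G" and "connected_graph G" and "real_structure G iV iE"
  shows "s_inv G iV iE mod 2 = (genus G + 1) mod 2
     \<and> 0 \<le> s_inv G iV iE \<and> s_inv G iV iE \<le> genus G + 1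
     \<and> (a_inv G iV iE = 1 \<longrightarrow> s_inv G iV iE \<noteq> genus G + 1)
     \<and> (a_inv G iV iE = 0 \<longrightarrow> s_inv G iV iE \<noteq> 0)"
proof -
  interpret real_graph G iV iE using assms by unfold_locales
  obtain p q r where pqr: "card E_away = 2 * p" "card E_touch = 2 * q" "card V_cplx = 2 * r"
    using card_E_away card_E_touch card_V_cplx by blast
  define d where "d = 1 + int p + int q - int r - int (card (components RL))"
  have genus: "genus G + 1 = s_inv G iV iE + 2 * d"
    using genus_eq s_inv_eq card_E_split card_V_split pqr unfolding d_def by simp
  have "int (2 * card (components RL) + card V_cplx + a_inv G iV iE)
      \<le> int (card E_away + card E_touch + 2)"
    using harnack_bound by (simp only: of_nat_le_iff)
  then have "int (a_inv G iV iE) \<le> 2 * d" unfolding d_def pqr by simp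
  moreover have "0 \<le> s_inv G iV iE" using s_inv_ge by linarith
  ultimately show ?thesis using genus s_inv_nonzero by auto
qed

end
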